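(* For every positive integer $n$, $$(\sigma\ast\delta)(n)=\tfrac12\,(\mathbf 1\ast \tau\delta)(n),$$ where $\tau\delta$ is the pointwise product.
   Context: The arithmetic derivative $\delta$ is defined by $\delta(p)=1$ for every prime $p$ and $\delta(mn)=m\delta(n)+n\delta(m)$ for all positive integers $m,n$; equivalently $\delta(1)=0$ and $\delta(n)=n\sum_{p^\alpha\| n}\alpha/p$. $\mathbf 1(n)=1$ for all $n$, $\sigma(n)$ is the sum of the positive divisors of $n$, $\tau(n)$ is the number of positive divisors of $n$. The Dirichlet convolution is $(u\ast v)(n)=\sum_{d\mid n}u(d)v(n/d)$. *)

theory Defs
  imports Complex_Main "HOL-Computational_Algebra.Primes"
begin

text \<open>Arithmetic derivative: delta(n) = n * sum over p^a || n of a/p; delta(0) = 0 by convention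
  (only positive arguments are used).\<close>
definition arith_deriv :: "nat \<Rightarrow> nat" where
  "arith_deriv n = (\<Sum>p\<in>prime_factors n. multiplicity p n * (n div p))"

definition divisor_sigma :: "nat \<Rightarrow> nat" where
  "divisor_sigma n = (\<Sum>d | d dvd n. d)"

definition divisor_tau :: "nat \<Rightarrow> nat" where
  "divisor_tau n = card {d. d dvd n}"

definition dirichlet_conv :: "(nat \<Rightarrow> 'a::comm_semiring_1) \<Rightarrow> (nat \<Rightarrow> 'a) \<Rightarrow> nat \<Rightarrow> 'a" where
  "dirichlet_conv u v n = (\<Sum>d | d dvd n. u d * v (n div d))"

end

theory Submission
  imports Defs
begin

text \<open>Since \<open>\<sigma> = id \<ast> \<one>\<close>, associativity and commutativity of Dirichlet convolution give
  \<open>\<sigma> \<ast> \<delta> = \<one> \<ast> (id \<ast> \<delta>)\<close>. The Leibniz rule turns every term of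
  \<open>(id \<ast> \<delta>)(n) + (\<delta> \<ast> id)(n) = \<Sum>\<^bsub>d | n\<^esub> (d \<delta>(n/d) + (n/d) \<delta>(d))\<close> into \<open>\<delta>(n)\<close>, so
  \<open>id \<ast> \<delta> = \<tau>\<delta> / 2\<close> pointwise.\<close>

lemma dirichlet_conv_cong:
  assumes "\<And>d. d dvd n \<Longrightarrow> u d = u' d" and "\<And>d. d dvd n \<Longrightarrow> v d = v' d"
  shows "dirichlet_conv u v n = dirichlet_conv u' v' n"
  unfolding dirichlet_conv_def by (rule sum.cong) (auto simp: assms)

lemma dirichlet_conv_commute:
  assumes "n > 0"
  shows "dirichlet_conv u v n = dirichlet_conv v u n"
  unfolding dirichlet_conv_def
  by (rule sum.reindex_bij_witness[of _ "\<lambda>d. n div d" "\<lambda>d. n div d"])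
     (use assms in \<open>auto simp: div_div_eq_right dvd_div_eq_mult mult.commute\<close>)

lemma dirichlet_conv_assoc:
  assumes n: "n > 0"
  shows "dirichlet_conv (dirichlet_conv u v) w n = dirichlet_conv u (dirichlet_conv v w) n"
proof -
  let ?S = "Sigma {d. d dvd n} (\<lambda>d. {e. e dvd d})"
  let ?T = "Sigma {e. e dvd n} (\<lambda>e. {f. f dvd n div e})"
  have fin: "finite {e. e dvd m}" if "m dvd n" for m
    using n that by (auto dest: dvd_pos_nat)
  have to_S: "e * f dvd n \<and> e * f div e = f \<and> n div (e * f) = n div e div f"
    if "e dvd n" "f dvd n div e" for e f
  proof -
    from that obtain j where j: "n = e * j" by auto
    with that n obtain k where k: "j = f * k" by auto
    show ?thesis using n j k by (auto simp: mult.assoc div_mult2_eq)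
  qed
  have to_T: "d div e dvd n div e \<and> e * (d div e) = d \<and> n div e div (d div e) = n div d"
    if "d dvd n" "e dvd d" for d e
  proof -
    from that obtain j k where "n = d * j" "d = e * k" by (auto elim!: dvdE)
    then show ?thesis using n by (auto simp: mult.assoc div_mult2_eq)
  qed
  have "dirichlet_conv (dirichlet_conv u v) w n = (\<Sum>(d, e)\<in>?S. u e * v (d div e) * w (n div d))"
    unfolding dirichlet_conv_def sum_distrib_right
    by (subst sum.Sigma) (use fin in auto)
  also have "\<dots> = (\<Sum>(e, f)\<in>?T. u e * (v f * w (n div e div f)))"
    by (rule sum.reindex_bij_witness[of _ "\<lambda>(e, f). (e * f, e)" "\<lambda>(d, e). (e, d div e)"])
       (auto simp: to_S to_T mult.assoc)
  also have "\<dots> = dirichlet_conv u (dirichlet_conv v w) n"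
    unfolding dirichlet_conv_def sum_distrib_left
    by (subst sum.Sigma) (use n in \<open>auto dest: dvd_pos_nat\<close>)
  finally show ?thesis .
qed

lemma divisor_sigma_eq_dirichlet_conv:
  assumes "n > 0"
  shows "real (divisor_sigma n) = dirichlet_conv (\<lambda>k. 1) real n"
proof -
  have "real (divisor_sigma n) = dirichlet_conv real (\<lambda>k. 1) n"
    by (simp add: divisor_sigma_def dirichlet_conv_def)
  then show ?thesis using dirichlet_conv_commute[OF assms] by simp
qed

lemma arith_deriv_eq_sum:
  assumes "m > 0" "finite A" "prime_factors m \<subseteq> A" "\<forall>p\<in>A. prime p"
  shows "arith_deriv m = (\<Sum>p\<in>A. multiplicity p m * (m div p))"
  unfolding arith_deriv_def
proof (rule sum.mono_neutral_left[OF assms(2,3)])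
  show "\<forall>p\<in>A - prime_factors m. multiplicity p m * (m div p) = 0"
    using assms by (auto simp: prime_factors_dvd not_dvd_imp_multiplicity_0)
qed

lemma multiplicity_mult_div_prime:
  assumes "prime p"
  shows "multiplicity p m * (m * n div p) = n * (multiplicity p m * (m div p))"
proof (cases "p dvd m")
  case True
  then obtain k where "m = p * k" by blast
  then show ?thesis using assms by (simp add: prime_gt_0_nat)
qed (simp add: not_dvd_imp_multiplicity_0)

lemma arith_deriv_mult:
  assumes m: "m > 0" and n: "n > 0"
  shows "arith_deriv (m * n) = m * arith_deriv n + n * arith_deriv m"
proof -
  define A where "A = prime_factors m \<union> prime_factors n"
  have A: "finite A" "\<forall>p\<in>A. prime p" "prime_factors (m * n) = A"
    unfolding A_def using m n by (auto simp: prime_factors_product)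
  have "arith_deriv (m * n) = (\<Sum>p\<in>A. multiplicity p (m * n) * (m * n div p))"
    using arith_deriv_eq_sum[of "m * n" A] A m n by simp
  also have "\<dots> = (\<Sum>p\<in>A. m * (multiplicity p n * (n div p)) + n * (multiplicity p m * (m div p)))"
  proof (rule sum.cong[OF refl])
    fix p assume "p \<in> A"
    then have p: "prime p" using A by auto
    have mult_distrib: "multiplicity p (m * n) = multiplicity p m + multiplicity p n"
      using p m n by (simp add: prime_elem_multiplicity_mult_distrib)
    show "multiplicity p (m * n) * (m * n div p)
        = m * (multiplicity p n * (n div p)) + n * (multiplicity p m * (m div p))"
      unfolding mult_distrib add_mult_distrib multiplicity_mult_div_prime[OF p]
        multiplicity_mult_div_prime[OF p, of n m, unfolded mult.commute[of n m]]
      by simp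
  qed
  also have "\<dots> = m * arith_deriv n + n * arith_deriv m"
    using arith_deriv_eq_sum[of m A] arith_deriv_eq_sum[of n A] A m n unfolding A_def
    by (simp add: sum.distrib sum_distrib_left)
  finally show ?thesis .
qed

lemma dirichlet_conv_id_arith_deriv:
  assumes n: "n > 0"
  shows "2 * dirichlet_conv real (\<lambda>k. real (arith_deriv k)) n
       = real (divisor_tau n) * real (arith_deriv n)"
proof -
  let ?C = "dirichlet_conv real (\<lambda>k. real (arith_deriv k)) n"
  have "2 * ?C = ?C + dirichlet_conv (\<lambda>k. real (arith_deriv k)) real n"
    using dirichlet_conv_commute[OF n] by simp
  also have "\<dots> = (\<Sum>d | d dvd n. real (d * arith_deriv (n div d) + n div d * arith_deriv d))"
    by (simp add: dirichlet_conv_def sum.distrib mult.commute)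
  also have "\<dots> = (\<Sum>d | d dvd n. real (arith_deriv n))"
  proof (rule sum.cong[OF refl])
    fix d assume "d \<in> {d. d dvd n}"
    then obtain k where k: "n = d * k" by auto
    then have "d > 0" "k > 0" using n by auto
    then show "real (d * arith_deriv (n div d) + n div d * arith_deriv d) = real (arith_deriv n)"
      using k arith_deriv_mult[of d k] by simp
  qed
  also have "\<dots> = real (divisor_tau n) * real (arith_deriv n)"
    by (simp add: divisor_tau_def)
  finally show ?thesis .
qed

theorem mainTheorem7:
  fixes n :: nat
  assumes "n > 0"
  shows "dirichlet_conv (\<lambda>k. real (divisor_sigma k)) (\<lambda>k. real (arith_deriv k)) n
       = (1/2) * dirichlet_conv (\<lambda>k. 1) (\<lambda>k. real (divisor_tau k) * real (arith_deriv k)) n"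
proof -
  have pos: "d > 0" if "d dvd n" for d
    using assms that by (auto dest: dvd_pos_nat)
  have "dirichlet_conv (\<lambda>k. real (divisor_sigma k)) (\<lambda>k. real (arith_deriv k)) n
      = dirichlet_conv (dirichlet_conv (\<lambda>k. 1) real) (\<lambda>k. real (arith_deriv k)) n"
    by (rule dirichlet_conv_cong) (simp_all add: divisor_sigma_eq_dirichlet_conv pos)
  also have "\<dots> = dirichlet_conv (\<lambda>k. 1) (dirichlet_conv real (\<lambda>k. real (arith_deriv k))) n"
    by (rule dirichlet_conv_assoc[OF assms])
  also have "\<dots> = dirichlet_conv (\<lambda>k. 1) (\<lambda>k. (1/2) * (real (divisor_tau k) * real (arith_deriv k))) n"
    by (rule dirichlet_conv_cong)
       (simp_all add: dirichlet_conv_id_arith_deriv[symmetric] pos)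
  also have "\<dots> = (1/2) * dirichlet_conv (\<lambda>k. 1) (\<lambda>k. real (divisor_tau k) * real (arith_deriv k)) n"
    by (simp add: dirichlet_conv_def sum_distrib_left)
  finally show ?thesis .
qed

end
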